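(* Let $n\ge2$, $q_1,q_2\in\mathbb{C}$ with $q_1q_2\ne0$ and $q_1\ne q_2$, and $q=-q_2/q_1$. Let $J=\mathrm{diag}(1,q,\dots,q^{n-1})$ and, for $1\le i\le n-1$, $S_i=\frac{1}{q_1-q_2}\bigl(2\beta_i-(q_1+q_2)I_n\bigr)$, where $\beta_i$ is the matrix of $T_i$ on $\mathbf{E}$. Then $S_i^{\mathsf T}JS_i=J$ (so $S_i$ preserves the form $\langle-,-\rangle$). Moreover, with $f_0=e_1+\cdots+e_n$, $f_i=q_2e_i+q_1e_{i+1}$ and $\mathbf{L}^\perp=\{v\in\mathbf{E}:\langle v,f_0\rangle=0\}$, for each $i=1,\dots,n-1$: (a) $S_if_0=f_0$; (b) $f_i\in\mathbf{L}^\perp$; (c) $\mathbf{L}^\perp$ is an $H_n(q_1,q_2)$-submodule of $\mathbf{E}$; (d) $\mathbf{F}=\mathbf{L}^\perp$, where $\mathbf{F}=\mathrm{span}(f_1,\dots,f_{n-1})$.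
   Context: The Iwahori--Hecke algebra $H_n(q_1,q_2)$ is generated by $T_1,\dots,T_{n-1}$ subject to $T_iT_{i+1}T_i=T_{i+1}T_iT_{i+1}$, $T_iT_j=T_jT_i$ ($|i-j|>1$) and $(T_i-q_1)(T_i-q_2)=0$. It acts on $\mathbf{E}=\mathbb{C}^n$ (basis $e_1,\dots,e_n$) by $T_ie_j=q_1e_j$ ($j\ne i,i+1$), $T_ie_{i+1}=-q_2e_i$, $T_ie_i=(q_1+q_2)e_i+q_1e_{i+1}$ (generalized Burau representation). The symmetric bilinear form on $\mathbf{E}$ is $\langle e_i,e_j\rangle=\delta_{ij}q^{j-1}$, with Gram matrix $J$. *)

theory Defs
  imports "Jordan_Normal_Form.VS_Connect"
begin

(* Vectors of E = C^n are complex vec of dimension n; basis vector e_j (j = 1..n)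
   is unit_vec n (j-1), i.e. we use 0-based indices internally. *)

definition hq :: "complex \<Rightarrow> complex \<Rightarrow> complex" where
  "hq q1 q2 = - q2 / q1"

(* Matrix beta_i of T_i on E (generalized Burau representation), i in {1..n-1};
   column c holds the coordinates of T_i e_(c+1). *)
definition burau :: "nat \<Rightarrow> complex \<Rightarrow> complex \<Rightarrow> nat \<Rightarrow> complex mat" where
  "burau n q1 q2 i = mat n n (\<lambda>(r, c).
     if c = i - 1 then (if r = i - 1 then q1 + q2 else if r = i then q1 else 0)
     else if c = i then (if r = i - 1 then - q2 else 0)
     else (if r = c then q1 else 0))"

definition gram :: "nat \<Rightarrow> complex \<Rightarrow> complex mat" where
  "gram n q = mat n n (\<lambda>(r, c). if r = c then q ^ r else 0)"

definition bform :: "nat \<Rightarrow> complex \<Rightarrow> complex vec \<Rightarrow> complex vec \<Rightarrow> complex" where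
  "bform n q v w = v \<bullet> (gram n q *\<^sub>v w)"

definition Smat :: "nat \<Rightarrow> complex \<Rightarrow> complex \<Rightarrow> nat \<Rightarrow> complex mat" where
  "Smat n q1 q2 i = (1 / (q1 - q2)) \<cdot>\<^sub>m (2 \<cdot>\<^sub>m burau n q1 q2 i - (q1 + q2) \<cdot>\<^sub>m 1\<^sub>m n)"

definition ebas :: "nat \<Rightarrow> nat \<Rightarrow> complex vec" where
  "ebas n j = unit_vec n (j - 1)"

definition f0 :: "nat \<Rightarrow> complex vec" where
  "f0 n = vec n (\<lambda>_. 1)"

definition fvec :: "nat \<Rightarrow> complex \<Rightarrow> complex \<Rightarrow> nat \<Rightarrow> complex vec" where
  "fvec n q1 q2 i = q2 \<cdot>\<^sub>v ebas n i + q1 \<cdot>\<^sub>v ebas n (i + 1)"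

definition Lperp :: "nat \<Rightarrow> complex \<Rightarrow> complex vec set" where
  "Lperp n q = {v \<in> carrier_vec n. bform n q v (f0 n) = 0}"

definition Fspan :: "nat \<Rightarrow> complex \<Rightarrow> complex \<Rightarrow> complex vec set" where
  "Fspan n q1 q2 = LinearCombinations.module.span class_ring (module_vec TYPE(complex) n) (fvec n q1 q2 ` {1..<n})"

end

theory Submission imports Defs begin

(* Write q = -q2/q1, i.e. q1 q + q2 = 0; this relation, q1 \<noteq> q2 and (for the spanning statement)
   q1 \<noteq> 0 are all that is used.
   The vector J f0 = (1, q, ..., q^(n-1)) is a left eigenvector and f0 a right eigenvector of every
   beta_i, both for the eigenvalue q1. Hence L^perp, the kernel of v \<mapsto> v \<bullet> J f0, is beta_i-stable,
   and S_i f0 = f0 because S_i is an affine expression in beta_i. S_i differs from the identity only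
   in a 2x2 diagonal block, where S_i^T J S_i = J is a direct computation. Finally every f_i lies in
   L^perp, and they span it: subtracting a multiple of f_m clears the last nonzero coordinate of a
   vector of L^perp, and a vector of L^perp supported on the first coordinate is zero. *)

lemma sum_eq_single_support:
  assumes "a < (n::nat)" "\<And>k. k < n \<Longrightarrow> k \<noteq> a \<Longrightarrow> f k = 0"
  shows "(\<Sum>k\<in>{0..<n}. f k) = (f a :: 'a::comm_monoid_add)"
  using assms by (subst sum.mono_neutral_right[where S = "{a}"]) auto

lemma sum_eq_pair_support:
  assumes "a < (n::nat)" "b < n" "a \<noteq> b" "\<And>k. k < n \<Longrightarrow> k \<noteq> a \<Longrightarrow> k \<noteq> b \<Longrightarrow> f k = 0"
  shows "(\<Sum>k\<in>{0..<n}. f k) = (f a + f b :: 'a::comm_monoid_add)"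
  using assms by (subst sum.mono_neutral_right[where S = "{a, b}"]) auto

lemma smult_mat_mult_vec:
  assumes "A \<in> carrier_mat nr nc" "v \<in> carrier_vec nc"
  shows "(k \<cdot>\<^sub>m A) *\<^sub>v v = k \<cdot>\<^sub>v (A *\<^sub>v v)"
  using assms by (intro eq_vecI) (auto simp: scalar_prod_def sum_distrib_left ac_simps)

lemma mult_hq_add_eq_0: "q1 \<noteq> 0 \<Longrightarrow> q1 * hq q1 q2 + q2 = 0"
  by (simp add: hq_def)

lemma gram_mult_f0: "gram n q *\<^sub>v f0 n = vec n (\<lambda>r. q ^ r)"
  by (rule eq_vecI) (auto simp: gram_def f0_def scalar_prod_def sum_eq_single_support)

lemma Lperp_altdef: "Lperp n q = {v \<in> carrier_vec n. v \<bullet> vec n (\<lambda>r. q ^ r) = 0}"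
  by (simp add: Lperp_def bform_def gram_mult_f0)

lemma burau_mult_f0:
  assumes "1 \<le> i" "i < n"
  shows "burau n q1 q2 i *\<^sub>v f0 n = q1 \<cdot>\<^sub>v f0 n"
proof (rule eq_vecI)
  fix r assume "r < dim_vec (q1 \<cdot>\<^sub>v f0 n)"
  then have r: "r < n" by (simp add: f0_def)
  have "(burau n q1 q2 i *\<^sub>v f0 n) $ r = (\<Sum>c\<in>{0..<n}. burau n q1 q2 i $$ (r, c))"
    using r by (simp add: burau_def f0_def scalar_prod_def)
  also have "\<dots> = q1"
  proof -
    consider "r = i - 1" | "r = i" | "r \<noteq> i - 1" "r \<noteq> i" by blast
    then show ?thesis
    proof cases
      case 1
      then show ?thesis using assms r
        by (subst sum_eq_pair_support[of "i - 1" _ i]) (auto simp: burau_def)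
    next
      case 2
      then show ?thesis using assms r
        by (subst sum_eq_single_support[of "i - 1"]) (auto simp: burau_def)
    next
      case 3
      then show ?thesis using assms r
        by (subst sum_eq_single_support[of r]) (auto simp: burau_def)
    qed
  qed
  finally show "(burau n q1 q2 i *\<^sub>v f0 n) $ r = (q1 \<cdot>\<^sub>v f0 n) $ r"
    using r by (simp add: f0_def)
qed (simp add: burau_def f0_def)

lemma burau_carrier: "burau n q1 q2 i \<in> carrier_mat n n"
  by (simp add: burau_def)

lemma Smat_carrier: "Smat n q1 q2 i \<in> carrier_mat n n"
  unfolding Smat_def by (intro smult_carrier_mat minus_carrier_mat) (auto simp: burau_carrier)

lemma Smat_mult_f0:
  assumes "q1 \<noteq> q2" "1 \<le> i" "i < n"
  shows "Smat n q1 q2 i *\<^sub>v f0 n = f0 n"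
proof -
  have f0: "f0 n \<in> carrier_vec n" by (simp add: f0_def)
  have B: "burau n q1 q2 i \<in> carrier_mat n n" by (rule burau_carrier)
  have "Smat n q1 q2 i *\<^sub>v f0 n
      = (1 / (q1 - q2)) \<cdot>\<^sub>v ((2 \<cdot>\<^sub>m burau n q1 q2 i - (q1 + q2) \<cdot>\<^sub>m 1\<^sub>m n) *\<^sub>v f0 n)"
    unfolding Smat_def using B f0 by (intro smult_mat_mult_vec) auto
  also have "(2 \<cdot>\<^sub>m burau n q1 q2 i - (q1 + q2) \<cdot>\<^sub>m 1\<^sub>m n) *\<^sub>v f0 n
      = 2 \<cdot>\<^sub>v (burau n q1 q2 i *\<^sub>v f0 n) - (q1 + q2) \<cdot>\<^sub>v f0 n"
    using B f0 by (simp add: minus_mult_distrib_mat_vec[of _ n n] smult_mat_mult_vec[of _ n n])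
  also have "\<dots> = (q1 - q2) \<cdot>\<^sub>v f0 n"
    unfolding burau_mult_f0[OF assms(2,3)] by (intro eq_vecI) (auto simp: f0_def)
  finally show ?thesis
    using assms(1) by (simp add: smult_smult_assoc)
qed

lemma transpose_burau_mult_powers:
  assumes "1 \<le> i" "i < n" "q1 * q + q2 = 0"
  shows "(burau n q1 q2 i)\<^sup>T *\<^sub>v vec n (\<lambda>r. q ^ r) = q1 \<cdot>\<^sub>v vec n (\<lambda>r. q ^ r)"
proof (rule eq_vecI)
  fix c assume "c < dim_vec (q1 \<cdot>\<^sub>v vec n (\<lambda>r. q ^ r))"
  then have c: "c < n" by simp
  obtain j where j: "i = Suc j" using assms(1) by (cases i) auto
  have q2: "q2 = - q1 * q" using assms(3) by (simp add: eq_neg_iff_add_eq_0 add.commute)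
  have "((burau n q1 q2 i)\<^sup>T *\<^sub>v vec n (\<lambda>r. q ^ r)) $ c = (\<Sum>r\<in>{0..<n}. burau n q1 q2 i $$ (r, c) * q ^ r)"
    using c by (simp add: burau_def scalar_prod_def)
  also have "\<dots> = q1 * q ^ c"
  proof -
    consider "c = j" | "c = Suc j" | "c \<noteq> j" "c \<noteq> Suc j" by blast
    then show ?thesis
    proof cases
      case 1
      then show ?thesis using assms c j q2
        by (subst sum_eq_pair_support[of j _ "Suc j"]) (auto simp: burau_def algebra_simps)
    next
      case 2
      then show ?thesis using assms c j q2
        by (subst sum_eq_single_support[of j]) (auto simp: burau_def)
    next
      case 3
      then show ?thesis using assms c j
        by (subst sum_eq_single_support[of c]) (auto simp: burau_def)
    qed
  qed
  finally show "((burau n q1 q2 i)\<^sup>T *\<^sub>v vec n (\<lambda>r. q ^ r)) $ c = (q1 \<cdot>\<^sub>v vec n (\<lambda>r. q ^ r)) $ c"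
    using c by simp
qed (simp add: burau_def)

lemma burau_mult_Lperp:
  assumes "1 \<le> i" "i < n" "q1 * q + q2 = 0" "v \<in> Lperp n q"
  shows "burau n q1 q2 i *\<^sub>v v \<in> Lperp n q"
proof -
  let ?p = "vec n (\<lambda>r. q ^ r)"
  have v: "v \<in> carrier_vec n" "v \<bullet> ?p = 0" using assms(4) by (auto simp: Lperp_altdef)
  have B: "burau n q1 q2 i \<in> carrier_mat n n" by (rule burau_carrier)
  have "(burau n q1 q2 i *\<^sub>v v) \<bullet> ?p = ?p \<bullet> (burau n q1 q2 i *\<^sub>v v)"
    using B v by (intro comm_scalar_prod[of _ n]) auto
  also have "\<dots> = ((burau n q1 q2 i)\<^sup>T *\<^sub>v ?p) \<bullet> v"
    using B v by (intro transpose_vec_mult_scalar[symmetric]) auto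
  also have "\<dots> = q1 * (v \<bullet> ?p)"
    using v by (simp add: transpose_burau_mult_powers[OF assms(1-3)] comm_scalar_prod[of _ n])
  finally show ?thesis using B v by (simp add: Lperp_altdef)
qed

lemma fvec_in_Lperp:
  assumes "1 \<le> i" "i < n" "q1 * q + q2 = 0"
  shows "fvec n q1 q2 i \<in> Lperp n q"
proof -
  obtain j where j: "i = Suc j" using assms(1) by (cases i) auto
  have "fvec n q1 q2 i \<bullet> vec n (\<lambda>r. q ^ r) = q2 * q ^ j + q1 * q ^ Suc j"
    using assms j by (subst scalar_prod_def, subst sum_eq_pair_support[of j _ "Suc j"])
      (auto simp: fvec_def ebas_def)
  also have "\<dots> = (q1 * q + q2) * q ^ j" by (simp add: algebra_simps)
  finally show ?thesis using assms(3) by (simp add: Lperp_altdef fvec_def ebas_def)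
qed

lemma Lperp_add: "v \<in> Lperp n q \<Longrightarrow> w \<in> Lperp n q \<Longrightarrow> v + w \<in> Lperp n q"
  by (simp add: Lperp_altdef add_scalar_prod_distrib[of _ n])

lemma Lperp_smult: "v \<in> Lperp n q \<Longrightarrow> c \<cdot>\<^sub>v v \<in> Lperp n q"
  by (simp add: Lperp_altdef)

lemma Lperp_submodule: "submodule class_ring (Lperp n q) (module_vec TYPE(complex) n)"
  unfolding submodule_def using vec_module[of n]
  by (auto simp: module_vec_simps Lperp_add Lperp_smult) (auto simp: Lperp_altdef)

lemma Lperp_in_Fspan_if_supported:
  assumes "q1 \<noteq> 0" "q1 * q + q2 = 0"
  shows "v \<in> Lperp n q \<Longrightarrow> \<forall>r. m < r \<longrightarrow> r < n \<longrightarrow> v $ r = 0 \<Longrightarrow> v \<in> Fspan n q1 q2"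
proof (induction m arbitrary: v)
  interpret vec_space "TYPE(complex)" n .
  case 0
  have v: "v \<in> carrier_vec n" "v \<bullet> vec n (\<lambda>r. q ^ r) = 0" using "0.prems"(1) by (auto simp: Lperp_altdef)
  have "v = 0\<^sub>v n"
  proof (rule eq_vecI)
    fix r assume r: "r < dim_vec (0\<^sub>v n)"
    show "v $ r = 0\<^sub>v n $ r"
    proof (cases r)
      case 0
      have "v \<bullet> vec n (\<lambda>r. q ^ r) = v $ 0"
        using r v "0.prems"(2) by (subst scalar_prod_def, subst sum_eq_single_support[of 0]) auto
      then show ?thesis using r v 0 by simp
    qed (use r "0.prems"(2) in auto)
  qed (use v in simp)
  then show ?case unfolding Fspan_def using span_zero by simp
next
  interpret vec_space "TYPE(complex)" n .
  case (Suc m)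
  show ?case
  proof (cases "Suc m < n")
    case False
    then show ?thesis using Suc by auto
  next
    case True
    let ?f = "fvec n q1 q2 (Suc m)"
    \<comment> \<open>?f has its nonzero entries at the 0-based positions m and Suc m, so w vanishes beyond m.\<close>
    define c where "c = v $ Suc m / q1"
    define w where "w = v + (- c) \<cdot>\<^sub>v ?f"
    have v: "v \<in> carrier_vec n" using Suc.prems(1) by (simp add: Lperp_altdef)
    have gens: "fvec n q1 q2 ` {1..<n} \<subseteq> carrier_vec n" by (auto simp: fvec_def ebas_def)
    have f: "?f \<in> span (fvec n q1 q2 ` {1..<n})" using True in_own_span[OF gens] by auto
    have "w \<in> Lperp n q"
      unfolding w_def using Suc.prems(1) fvec_in_Lperp[OF _ True assms(2)] by (simp add: Lperp_add Lperp_smult)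
    moreover have "\<forall>r. m < r \<longrightarrow> r < n \<longrightarrow> w $ r = 0"
      using Suc.prems(2) v assms(1) by (auto simp: w_def c_def fvec_def ebas_def)
    ultimately have "w \<in> span (fvec n q1 q2 ` {1..<n})" using Suc.IH unfolding Fspan_def by simp
    moreover have "v = w + c \<cdot>\<^sub>v ?f"
      using v by (intro eq_vecI) (auto simp: w_def fvec_def ebas_def)
    ultimately show ?thesis
      unfolding Fspan_def using span_add1[OF gens _ smult_in_span[OF gens f]] by simp
  qed
qed

lemma Fspan_eq_Lperp:
  assumes "q1 \<noteq> 0" "q1 * q + q2 = 0"
  shows "Fspan n q1 q2 = Lperp n q"
proof
  interpret vec_space "TYPE(complex)" n .
  show "Fspan n q1 q2 \<subseteq> Lperp n q"
    unfolding Fspan_def using fvec_in_Lperp[OF _ _ assms(2)]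
    by (intro span_is_subset Lperp_submodule) auto
  show "Lperp n q \<subseteq> Fspan n q1 q2"
    using Lperp_in_Fspan_if_supported[OF assms, where m = n and n = n] by auto
qed

lemma Smat_index:
  assumes "q1 \<noteq> q2" "r < n" "c < n" "Suc j < n"
  shows "Smat n q1 q2 (Suc j) $$ (r, c) =
    (if r = j \<and> c = j then (q1 + q2) / (q1 - q2)
     else if r = j \<and> c = Suc j then - 2 * q2 / (q1 - q2)
     else if r = Suc j \<and> c = j then 2 * q1 / (q1 - q2)
     else if r = Suc j \<and> c = Suc j then - ((q1 + q2) / (q1 - q2))
     else if r = c then 1 else 0)" (is "_ = ?rhs")
proof -
  have "Smat n q1 q2 (Suc j) $$ (r, c)
      = (2 * burau n q1 q2 (Suc j) $$ (r, c) - (q1 + q2) * (if r = c then 1 else 0)) / (q1 - q2)"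
    using assms unfolding Smat_def by (simp add: burau_def)
  also have "\<dots> = ?rhs"
    using assms by (simp add: burau_def divide_simps; simp add: algebra_simps)
  finally show ?thesis .
qed

lemma transpose_mult_gram_mult_index:
  assumes "A \<in> carrier_mat n n" "B \<in> carrier_mat n n" "r < n" "c < n"
  shows "(A\<^sup>T * gram n q * B) $$ (r, c) = (\<Sum>k\<in>{0..<n}. A $$ (k, r) * q ^ k * B $$ (k, c))"
proof -
  have "A\<^sup>T * gram n q = mat n n (\<lambda>(r, k). A $$ (k, r) * q ^ k)"
    using assms(1) by (intro eq_matI) (auto simp: gram_def scalar_prod_def sum_eq_single_support)
  then show ?thesis
    using assms by (simp add: scalar_prod_def)
qed

(* (a, b; c, -a) is the block of S_i on the 0-based coordinates i - 1, i. *)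
lemma Smat_block_isometry:
  fixes q1 q2 q :: complex
  assumes "q1 * q + q2 = 0" "q1 \<noteq> q2"
  defines "a \<equiv> (q1 + q2) / (q1 - q2)" and "b \<equiv> - 2 * q2 / (q1 - q2)" and "c \<equiv> 2 * q1 / (q1 - q2)"
  shows "a * a + q * (c * c) = 1" and "a * b - q * (c * a) = 0" and "b * b + q * (a * a) = q"
proof -
  have d: "q1 - q2 \<noteq> 0" using assms(2) by simp
  have q2: "q2 = - q1 * q" using assms(1) by (simp add: eq_neg_iff_add_eq_0 add.commute)
  have "a * a + q * (c * c) = ((q1 + q2) * (q1 + q2) + 4 * q1 * (q1 * q)) / ((q1 - q2) * (q1 - q2))"
    unfolding a_def c_def by (simp add: add_divide_distrib diff_divide_distrib algebra_simps)
  also have "(q1 + q2) * (q1 + q2) + 4 * q1 * (q1 * q) = (q1 - q2) * (q1 - q2)"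
    unfolding q2 by (simp add: algebra_simps)
  finally show "a * a + q * (c * c) = 1" using d by simp
  have "a * b - q * (c * a) = - 2 * (q1 + q2) * (q1 * q + q2) / ((q1 - q2) * (q1 - q2))"
    unfolding a_def b_def c_def by (simp add: add_divide_distrib diff_divide_distrib algebra_simps)
  then show "a * b - q * (c * a) = 0" using assms(1) by simp
  have "b * b + q * (a * a) = (4 * q2 * q2 + q * ((q1 + q2) * (q1 + q2))) / ((q1 - q2) * (q1 - q2))"
    unfolding a_def b_def by (simp add: add_divide_distrib diff_divide_distrib algebra_simps)
  also have "4 * q2 * q2 + q * ((q1 + q2) * (q1 + q2)) = q * ((q1 - q2) * (q1 - q2))"
    unfolding q2 by (simp add: algebra_simps)
  finally show "b * b + q * (a * a) = q" using d by simp
qed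

lemma Smat_isometry:
  assumes "q1 * q + q2 = 0" "q1 \<noteq> q2" "1 \<le> i" "i < n"
  shows "(Smat n q1 q2 i)\<^sup>T * gram n q * Smat n q1 q2 i = gram n q"
proof (rule eq_matI)
  obtain j where j: "i = Suc j" using assms(3) by (cases i) auto
  let ?S = "Smat n q1 q2 i"
  have S: "?S \<in> carrier_mat n n" by (rule Smat_carrier)
  fix r c assume "r < dim_row (gram n q)" "c < dim_col (gram n q)"
  then have rc: "r < n" "c < n" by (auto simp: gram_def)
  have entry: "(?S\<^sup>T * gram n q * ?S) $$ (r, c) = (\<Sum>k\<in>{0..<n}. ?S $$ (k, r) * q ^ k * ?S $$ (k, c))"
    by (rule transpose_mult_gram_mult_index[OF S S rc])
  consider "r \<notin> {j, Suc j}" | "c \<notin> {j, Suc j}" | "r \<in> {j, Suc j}" "c \<in> {j, Suc j}" by blast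
  then show "(?S\<^sup>T * gram n q * ?S) $$ (r, c) = gram n q $$ (r, c)"
  proof cases
    case 1
    then show ?thesis unfolding entry
      by (subst sum_eq_single_support[of r]) (use rc assms j in \<open>auto simp: Smat_index gram_def\<close>)
  next
    case 2
    then show ?thesis unfolding entry
      by (subst sum_eq_single_support[of c]) (use rc assms j in \<open>auto simp: Smat_index gram_def\<close>)
  next
    case 3
    define a b c' where "a = (q1 + q2) / (q1 - q2)" and "b = - 2 * q2 / (q1 - q2)"
      and "c' = 2 * q1 / (q1 - q2)"
    note block = Smat_block_isometry[OF assms(1,2), folded a_def b_def c'_def]
    have entries: "?S $$ (j, j) = a" "?S $$ (j, Suc j) = b" "?S $$ (Suc j, j) = c'" "?S $$ (Suc j, Suc j) = - a"
      using assms j by (simp_all add: Smat_index a_def b_def c'_def)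
    have "(\<Sum>k\<in>{0..<n}. ?S $$ (k, r) * q ^ k * ?S $$ (k, c))
        = q ^ j * (?S $$ (j, r) * ?S $$ (j, c) + q * (?S $$ (Suc j, r) * ?S $$ (Suc j, c)))"
      by (subst sum_eq_pair_support[of j _ "Suc j"])
        (use 3 rc assms j in \<open>auto simp: Smat_index algebra_simps\<close>)
    also have "?S $$ (j, r) * ?S $$ (j, c) + q * (?S $$ (Suc j, r) * ?S $$ (Suc j, c))
        = (if r = c then (if r = j then 1 else q) else 0)"
      using 3 block by (auto simp: entries algebra_simps)
    also have "q ^ j * \<dots> = gram n q $$ (r, c)"
      using 3 rc by (auto simp: gram_def)
    finally show ?thesis unfolding entry .
  qed
qed (auto simp: gram_def Smat_def burau_def)

theorem lemma3p5:
  fixes n :: nat and q1 q2 :: complex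
  assumes "n \<ge> 2" and "q1 * q2 \<noteq> 0" and "q1 \<noteq> q2"
  defines "q \<equiv> hq q1 q2"
  shows "\<forall>i \<in> {1..<n}.
      (Smat n q1 q2 i)\<^sup>T * gram n q * Smat n q1 q2 i = gram n q
    \<and> Smat n q1 q2 i *\<^sub>v f0 n = f0 n
    \<and> fvec n q1 q2 i \<in> Lperp n q
    \<and> (\<forall>v \<in> Lperp n q. burau n q1 q2 i *\<^sub>v v \<in> Lperp n q)
    \<and> Fspan n q1 q2 = Lperp n q"
proof -
  have q1: "q1 \<noteq> 0" using assms(2) by simp
  have rel: "q1 * q + q2 = 0" unfolding q_def using q1 by (rule mult_hq_add_eq_0)
  show ?thesis
    using Smat_isometry[OF rel assms(3)] Smat_mult_f0[OF assms(3)] fvec_in_Lperp[OF _ _ rel]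
      burau_mult_Lperp[OF _ _ rel] Fspan_eq_Lperp[OF q1 rel]
    by auto
qed

end
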